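(* Let $n\ge 2$ and let $a_1,\dots,a_n$ be positive integers. For $k\ge 1$ put $p_k=K(a_1,\dots,a_k)$, $q_k=K(a_2,\dots,a_k)$ and $r_k=K(a_3,\dots,a_k)$, so that $[a_1,\dots,a_n]=p_n/q_n$ and $[a_2,\dots,a_n]=q_n/r_n$. Then \[ [a_n,\dots,a_2,a_1,a_2,\dots,a_n]=\frac{p_n^2-r_n^2}{p_{n-1}p_n-r_{n-1}r_n}. \]
   Context: $[b_1,\dots,b_k]=b_1+\cfrac{1}{b_2+\cfrac{1}{\ddots+\cfrac{1}{b_k}}}$ denotes a continued fraction. For positive integers $a_i,\dots,a_j$, $K(a_i,\dots,a_j)$ denotes the continuant, i.e. the numerator of $[a_i,\dots,a_j]$ written in lowest terms; by convention $K(a_i,\dots,a_j)=1$ if $j=i-1$ (empty sequence) and $K(a_i,\dots,a_j)=0$ if $j=i-2$. *)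

theory Defs
  imports Complex_Main
begin

fun cfrac :: "nat list \<Rightarrow> rat" where
  "cfrac [] = 0"
| "cfrac [b] = of_nat b"
| "cfrac (b # c # bs) = of_nat b + 1 / cfrac (c # bs)"

text \<open>Continuant K(a_i,...,a_j) of the sequence a: numerator of [a_i,...,a_j] in lowest
  terms; 1 for the empty sequence (j = i - 1) and 0 when j = i - 2.\<close>
definition K :: "(nat \<Rightarrow> nat) \<Rightarrow> nat \<Rightarrow> nat \<Rightarrow> int" where
  "K a i j = (if j + 1 = i then 1
              else if j + 2 = i then 0
              else fst (quotient_of (cfrac (map a [i..<Suc j]))))"

end

theory Submission
  imports Defs
begin

text \<open>Write \<open>p = K(b,x)\<close>, \<open>q = K(x)\<close>, \<open>r = K(tl x)\<close> and primes for the continuants with the last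
  entry dropped. Splitting the palindrome \<open>rev x @ b # x\<close> in the middle gives numerator
  \<open>q (p + r)\<close> and denominator \<open>q' p + r' q\<close>, using that continuants are invariant under reversal.
  Since \<open>p - r = b q\<close> and \<open>p' - r' = b q'\<close>, multiplying both by \<open>b\<close> yields \<open>p\<^sup>2 - r\<^sup>2\<close> and
  \<open>p' p - r' r\<close>.\<close>

fun cont :: "nat list \<Rightarrow> int" where
  "cont [] = 1"
| "cont [b] = int b"
| "cont (b # c # bs) = int b * cont (c # bs) + cont bs"

text \<open>The value \<open>0\<close> at \<open>[]\<close> matches the convention \<open>K(a\<^sub>i,\<dots>,a\<^sub>i\<^sub>-\<^sub>2) = 0\<close>.\<close>

definition cont_butlast :: "nat list \<Rightarrow> int" where
  "cont_butlast xs = (if xs = [] then 0 else cont (butlast xs))"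

lemma cont_Cons: "xs \<noteq> [] \<Longrightarrow> cont (b # xs) = int b * cont xs + cont (tl xs)"
  by (cases xs) auto

lemma cont_butlast_Cons:
  "xs \<noteq> [] \<Longrightarrow> cont_butlast (b # xs) = int b * cont_butlast xs + cont_butlast (tl xs)"
  by (cases xs rule: cont.cases) (auto simp: cont_butlast_def)

lemma cont_append:
  "ys \<noteq> [] \<Longrightarrow> cont (xs @ ys) = cont xs * cont ys + cont_butlast xs * cont (tl ys)"
proof (induction xs rule: cont.induct)
  case 1
  then show ?case by (simp add: cont_butlast_def)
next
  case (2 b)
  then show ?case by (cases ys rule: cont.cases) (auto simp: cont_butlast_def)
next
  case (3 b c bs)
  then show ?case by (simp add: cont_butlast_Cons algebra_simps)
qed

lemma cont_rev: "cont (rev xs) = cont xs"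
proof (induction xs rule: cont.induct)
  case (3 b c bs)
  have "cont (rev (b # c # bs)) = cont (rev (c # bs) @ [b])" by simp
  also have "\<dots> = cont (rev (c # bs)) * int b + cont_butlast (rev (c # bs))"
    by (subst cont_append) auto
  also have "cont_butlast (rev (c # bs)) = cont bs"
    using 3 by (simp add: cont_butlast_def butlast_rev)
  finally show ?case using 3 by (simp add: algebra_simps)
qed auto

lemma cont_butlast_rev: "cont_butlast (rev xs) = (if xs = [] then 0 else cont (tl xs))"
  by (simp add: cont_butlast_def butlast_rev cont_rev)

lemma cont_pos: "\<forall>x\<in>set xs. x > 0 \<Longrightarrow> cont xs \<ge> 1"
proof (induction xs rule: cont.induct)
  case (3 b c bs)
  then have "int b * cont (c # bs) \<ge> 1 * 1"
    by (intro mult_mono) auto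
  with 3 show ?case by simp
qed auto

lemma coprime_cont_tl: "coprime (cont xs) (cont (tl xs))"
proof (induction xs rule: cont.induct)
  case (3 b c bs)
  then have "coprime (cont bs) (cont (c # bs))" by (simp add: coprime_commute)
  then have "coprime (cont bs + int b * cont (c # bs)) (cont (c # bs))"
    by (meson coprime_def dvd_add_left_iff dvd_mult)
  then show ?case by (simp add: add.commute)
qed auto

lemma cfrac_eq_cont_div:
  "xs \<noteq> [] \<Longrightarrow> \<forall>x\<in>set xs. x > 0 \<Longrightarrow> cfrac xs = of_int (cont xs) / of_int (cont (tl xs))"
proof (induction xs rule: cfrac.induct)
  case (3 b c bs)
  have "cont (c # bs) \<ge> 1" using 3 cont_pos[of "c # bs"] by auto
  with 3 show ?case by (simp add: field_simps)
qed auto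

lemma quotient_of_cfrac:
  assumes "xs \<noteq> []" and "\<forall>x\<in>set xs. x > 0"
  shows "quotient_of (cfrac xs) = (cont xs, cont (tl xs))"
proof -
  have "cont (tl xs) \<ge> 1" using assms cont_pos[of "tl xs"] by (cases xs) auto
  moreover have "cfrac xs = Fract (cont xs) (cont (tl xs))"
    using cfrac_eq_cont_div[OF assms] by (simp add: Fract_of_int_quotient)
  ultimately show ?thesis
    using coprime_cont_tl[of xs] by (simp add: quotient_of_Fract normalize_stable)
qed

lemma K_eq_cont:
  "i \<le> j + 1 \<Longrightarrow> (\<And>k. i \<le> k \<Longrightarrow> k \<le> j \<Longrightarrow> a k > 0) \<Longrightarrow> K a i j = cont (map a [i..<Suc j])"
  unfolding K_def by (auto simp: quotient_of_cfrac)

lemma K_pred_eq_cont_butlast: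
  assumes "i \<le> j + 1" and "1 \<le> j" and "\<And>k. i \<le> k \<Longrightarrow> k \<le> j \<Longrightarrow> a k > 0"
  shows "K a i (j - 1) = cont_butlast (map a [i..<Suc j])"
proof (cases "i = j + 1")
  case True
  then show ?thesis using assms by (simp add: K_def cont_butlast_def)
next
  case False
  then have "K a i (j - 1) = cont (map a [i..<Suc (j - 1)])"
    using assms by (intro K_eq_cont) auto
  moreover have "butlast (map a [i..<Suc j]) = map a [i..<Suc (j - 1)]"
    using assms False by (simp add: map_butlast[symmetric])
  ultimately show ?thesis using False assms by (simp add: cont_butlast_def)
qed

lemma cont_palindrome:
  "xs \<noteq> [] \<Longrightarrow> cont (rev xs @ b # xs) = cont xs * (cont (b # xs) + cont (tl xs))"
  by (simp add: cont_append cont_rev cont_butlast_rev algebra_simps)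

lemma cont_tl_palindrome:
  assumes "xs \<noteq> []"
  shows "cont (tl (rev xs @ b # xs))
         = cont_butlast xs * cont (b # xs) + cont_butlast (tl xs) * cont xs"
proof -
  have "tl (rev xs @ b # xs) = rev (butlast xs) @ b # xs"
    using assms by (simp add: tl_append2) (metis butlast_rev rev_rev_ident)
  moreover have "cont_butlast (rev (butlast xs)) = cont_butlast (tl xs)"
    using assms by (cases xs; cases "tl xs") (auto simp: cont_butlast_rev cont_butlast_def cont_rev)
  ultimately show ?thesis
    using assms by (simp add: cont_append cont_rev cont_butlast_def)
qed

lemma cfrac_palindrome:
  assumes "xs \<noteq> []" and "b > 0" and "\<forall>x\<in>set xs. x > 0"
  shows "cfrac (rev xs @ b # xs)
         = of_int ((cont (b # xs))\<^sup>2 - (cont (tl xs))\<^sup>2)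
           / of_int (cont_butlast (b # xs) * cont (b # xs) - cont_butlast (tl xs) * cont (tl xs))"
proof -
  define p q r where "p = cont (b # xs)" and "q = cont xs" and "r = cont (tl xs)"
  define p' q' r' where "p' = cont_butlast (b # xs)" and "q' = cont_butlast xs"
    and "r' = cont_butlast (tl xs)"
  have p: "p = int b * q + r" and p': "p' = int b * q' + r'"
    unfolding p_def q_def r_def p'_def q'_def r'_def
    using assms(1) by (simp_all add: cont_Cons cont_butlast_Cons)
  have "cfrac (rev xs @ b # xs) = of_int (q * (p + r)) / of_int (q' * p + r' * q)"
    using assms cfrac_eq_cont_div[of "rev xs @ b # xs"]
      cont_palindrome[OF assms(1), of b] cont_tl_palindrome[OF assms(1), of b]
    unfolding p_def q_def r_def q'_def r'_def by simp
  also have "\<dots> = of_int (int b * (q * (p + r))) / of_int (int b * (q' * p + r' * q))"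
    using assms(2) by simp
  also have "int b * (q * (p + r)) = p\<^sup>2 - r\<^sup>2"
    using p by (simp add: power2_eq_square algebra_simps)
  also have "int b * (q' * p + r' * q) = p' * p - r' * r"
    using p p' by (simp add: algebra_simps)
  finally show ?thesis by (simp add: p_def r_def p'_def r'_def)
qed

theorem theorem3p15:
  fixes a :: "nat \<Rightarrow> nat" and n :: nat
  assumes "n \<ge> 2"
    and "\<And>k. 1 \<le> k \<Longrightarrow> k \<le> n \<Longrightarrow> a k > 0"
  shows "cfrac (rev (map a [2..<Suc n]) @ [a 1] @ map a [2..<Suc n])
         = of_int ((K a 1 n)\<^sup>2 - (K a 3 n)\<^sup>2)
           / of_int (K a 1 (n - 1) * K a 1 n - K a 3 (n - 1) * K a 3 n)"
proof -
  define xs where "xs = map a [2..<Suc n]"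
  have full: "a 1 # xs = map a [1..<Suc n]" and tail: "tl xs = map a [3..<Suc n]"
    using assms(1) unfolding xs_def by (simp_all add: upt_conv_Cons numeral_2_eq_2 numeral_3_eq_3)
  have "K a 1 n = cont (a 1 # xs)" "K a 3 n = cont (tl xs)"
    "K a 1 (n - 1) = cont_butlast (a 1 # xs)" "K a 3 (n - 1) = cont_butlast (tl xs)"
    unfolding full tail using assms
    by (intro K_eq_cont K_pred_eq_cont_butlast; auto)+
  moreover have "cfrac (rev xs @ a 1 # xs)
         = of_int ((cont (a 1 # xs))\<^sup>2 - (cont (tl xs))\<^sup>2)
           / of_int (cont_butlast (a 1 # xs) * cont (a 1 # xs)
                     - cont_butlast (tl xs) * cont (tl xs))"
    using assms by (intro cfrac_palindrome) (auto simp: xs_def)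
  ultimately show ?thesis by (simp add: xs_def)
qed

end
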